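(* Let $X$ be the set of numerical monoids $\langle n_1,n_2,n_3\rangle$ of embedding dimension three (presented by their minimal generators $n_1,n_2,n_3$) having exactly three Betti elements, and let $Y$ be the set of 0-matrices. Then the assignments \[ \langle n_1,n_2,n_3\rangle\mapsto \begin{pmatrix}0&r_{12}&r_{13}\\ r_{21}&0&r_{23}\\ r_{31}&r_{32}&0\end{pmatrix}\quad\text{and}\quad \begin{pmatrix}0&a_{12}&a_{13}\\ a_{21}&0&a_{23}\\ a_{31}&a_{32}&0\end{pmatrix}\mapsto\langle A_1,A_2,A_3\rangle \] give a bijection between $X$ and $Y$ (mutually inverse maps).
   Context: $\mathbb{N}$ denotes the nonnegative integers. A numerical monoid is a submonoid of $\mathbb{N}$ with finite complement; its embedding dimension is the number of minimal generators. For $x\in M=\langle n_1,n_2,n_3\rangle$, $\mathsf{Z}(x)=\{(a_1,a_2,a_3)\in\mathbb{N}^3\mid a_1n_1+a_2n_2+a_3n_3=x\}$. The graph $\nabla_x$ has vertex set $\mathsf{Z}(x)$, with distinct $v,v'$ adjacent iff $v\cdot v'\neq 0$; $x$ is a Betti element if $\nabla_x$ is disconnected. For $i=1,2,3$, $c_i=\min\{k\geq 1\mid \exists (a_1,a_2,a_3)\in\mathsf{Z}(kn_i),\ a_i=0\}$, and $r_{ij}\in\mathbb{N}$ are such that $c_in_i=r_{ij}n_j+r_{ik}n_k$ for $\{i,j,k\}=\{1,2,3\}$ (when $M$ has three Betti elements these coefficients are uniquely determined). A 0-matrix is a $3\times3$ matrix $\begin{pmatrix}0&a_{12}&a_{13}\\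 a_{21}&0&a_{23}\\ a_{31}&a_{32}&0\end{pmatrix}$ with $a_{ij}\in\mathbb{N}\setminus\{0\}$ such that $\langle A_1,A_2,A_3\rangle$ is a numerical monoid of embedding dimension three with three Betti elements, where $A_1=a_{12}a_{13}+a_{12}a_{23}+a_{13}a_{32}$, $A_2=a_{13}a_{21}+a_{21}a_{23}+a_{23}a_{31}$, $A_3=a_{12}a_{31}+a_{21}a_{32}+a_{31}a_{32}$. *)

theory Defs
  imports "HOL-Analysis.Finite_Cartesian_Product" "HOL-Library.Numeral_Type"
begin

type_synonym gens3 = "nat ^ 3"
type_synonym mat3 = "nat ^ 3 ^ 3"

definition lincomb :: "gens3 \<Rightarrow> nat ^ 3 \<Rightarrow> nat" where
  "lincomb n a = (\<Sum>i\<in>UNIV. a $ i * n $ i)"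

definition monoid3 :: "gens3 \<Rightarrow> nat set" where
  "monoid3 n = {x. \<exists>a. lincomb n a = x}"

definition is_numerical :: "gens3 \<Rightarrow> bool" where
  "is_numerical n \<longleftrightarrow> finite (UNIV - monoid3 n)"

text \<open>n$1, n$2, n$3 are the minimal generators: none lies in the monoid generated by the
  other two (this forces them to be nonzero and pairwise distinct).\<close>
definition minimal_gens3 :: "gens3 \<Rightarrow> bool" where
  "minimal_gens3 n \<longleftrightarrow> (\<forall>i. \<not> (\<exists>a. a $ i = 0 \<and> lincomb n a = n $ i))"

definition factorizations :: "gens3 \<Rightarrow> nat \<Rightarrow> (nat ^ 3) set" where
  "factorizations n x = {a. lincomb n a = x}"

definition dotp :: "nat ^ 3 \<Rightarrow> nat ^ 3 \<Rightarrow> nat" where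
  "dotp u v = (\<Sum>i\<in>UNIV. u $ i * v $ i)"

definition nabla_edges :: "gens3 \<Rightarrow> nat \<Rightarrow> ((nat ^ 3) \<times> (nat ^ 3)) set" where
  "nabla_edges n x = {(u, v). u \<in> factorizations n x \<and> v \<in> factorizations n x
      \<and> u \<noteq> v \<and> dotp u v \<noteq> 0}"

definition is_Betti :: "gens3 \<Rightarrow> nat \<Rightarrow> bool" where
  "is_Betti n x \<longleftrightarrow> x \<in> monoid3 n \<and>
     (\<exists>u\<in>factorizations n x. \<exists>v\<in>factorizations n x. (u, v) \<notin> (nabla_edges n x)\<^sup>*)"

definition Betti_elements :: "gens3 \<Rightarrow> nat set" where
  "Betti_elements n = {x. is_Betti n x}"

definition X_set :: "gens3 set" where
  "X_set = {n. is_numerical n \<and> minimal_gens3 n \<and> card (Betti_elements n) = 3}"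

definition c_coef :: "gens3 \<Rightarrow> 3 \<Rightarrow> nat" where
  "c_coef n i = (LEAST k. k \<ge> 1 \<and> (\<exists>a\<in>factorizations n (k * n $ i). a $ i = 0))"

text \<open>r_ij: the (unique) coefficients with c_i n_i = r_ij n_j + r_ik n_k.\<close>
definition r_coef :: "gens3 \<Rightarrow> 3 \<Rightarrow> 3 \<Rightarrow> nat" where
  "r_coef n i j = (THE a. a \<in> factorizations n (c_coef n i * n $ i) \<and> a $ i = 0) $ j"

definition r_matrix :: "gens3 \<Rightarrow> mat3" where
  "r_matrix n = (\<chi> i j. if i = j then 0 else r_coef n i j)"

definition A_gens :: "mat3 \<Rightarrow> gens3" where
  "A_gens a = (\<chi> i.
     if i = 1 then a$1$2 * a$1$3 + a$1$2 * a$2$3 + a$1$3 * a$3$2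
     else if i = 2 then a$1$3 * a$2$1 + a$2$1 * a$2$3 + a$2$3 * a$3$1
     else a$1$2 * a$3$1 + a$2$1 * a$3$2 + a$3$1 * a$3$2)"

definition is_zero_matrix :: "mat3 \<Rightarrow> bool" where
  "is_zero_matrix a \<longleftrightarrow> (\<forall>i. a$i$i = 0) \<and> (\<forall>i j. i \<noteq> j \<longrightarrow> a$i$j > 0) \<and>
     is_numerical (A_gens a) \<and> minimal_gens3 (A_gens a) \<and> card (Betti_elements (A_gens a)) = 3"

definition Y_set :: "mat3 set" where
  "Y_set = {a. is_zero_matrix a}"

end

theory Submission
  imports Defs "HOL-Analysis.Cartesian_Space"
begin

(* Let c_i n_i = r_ij n_j + r_ik n_k be the critical relations. A factorization isolated in
   nabla_x must be a pure power k e_i, and then k = c_i; so the Betti elements are exactly the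
   c_i n_i, and three Betti elements means that these are distinct. Minimality of the c_i then
   gives r_ij < c_j and c_i = r_ji + r_ki, so every r_ij is positive. A descent on the weighted
   norm |x| n_1 + |y| n_2 + |z| n_3 shows that the first two relation vectors span all integer
   relations among n_1, n_2, n_3; as gcd (n_1, n_2, n_3) = 1 this makes n the vector of 2x2
   minors A(r). Conversely, if n = A(a) for a 0-matrix a, the rows of a are relations; their
   coordinates in that basis form a unimodular matrix which sign constraints force to be the
   identity, so a = r. *)

section \<open>Critical relations over the integers\<close>

lemma sign_pattern_of_relation:
  fixes x y z N1 N2 N3 :: int
  assumes "x*N1 + y*N2 + z*N3 = 0" "N1 > 0" "N2 > 0" "N3 > 0"
  shows "(x > 0 \<and> y \<le> 0 \<and> z \<le> 0) \<or> (y > 0 \<and> x \<le> 0 \<and> z \<le> 0) \<or> (z > 0 \<and> x \<le> 0 \<and> y \<le> 0) \<or>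
         (x < 0 \<and> y \<ge> 0 \<and> z \<ge> 0) \<or> (y < 0 \<and> x \<ge> 0 \<and> z \<ge> 0) \<or> (z < 0 \<and> x \<ge> 0 \<and> y \<ge> 0) \<or>
         (x = 0 \<and> y = 0 \<and> z = 0)"
proof -
  have "0 < t*N \<longleftrightarrow> 0 < t" "t*N < 0 \<longleftrightarrow> t < 0" if "N > 0" for t N :: int
    using that by (auto simp: zero_less_mult_iff mult_less_0_iff)
  then show ?thesis
    using assms by (smt (verit))
qed

lemma proportional_to_coprime_triple:
  fixes A1 A2 A3 N1 N2 N3 :: int
  assumes "A1*N2 = A2*N1" "A1*N3 = A3*N1" "A2*N3 = A3*N2" "gcd N1 (gcd N2 N3) = 1"
  shows "\<exists>d. A1 = d*N1 \<and> A2 = d*N2 \<and> A3 = d*N3"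
proof -
  obtain s t where st: "s*N2 + t*N3 = gcd N2 N3" using bezout_int by blast
  obtain s' t' where st': "s'*N1 + t'*gcd N2 N3 = 1" using bezout_int[of N1 "gcd N2 N3"] assms(4) by auto
  have "s'*N1 + (t' * s)*N2 + (t' * t)*N3 = s'*N1 + t'*(s*N2 + t*N3)" by (simp add: algebra_simps)
  then have bezout: "s'*N1 + (t' * s)*N2 + (t' * t)*N3 = 1" using st st' by simp
  define d where "d = s'*A1 + (t' * s)*A2 + (t' * t)*A3"
  have "A1 = d*N1" "A2 = d*N2" "A3 = d*N3"
    using assms(1-3) bezout unfolding d_def by algebra+
  then show ?thesis by blast
qed

lemma coeffs_pos_and_ordered:
  fixes p q r w t u :: int
  assumes "r > 0" "w \<ge> 0" "t > 0" "u > 0" "q*(r + w) < p*r" "p*t + q*u > 0"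
  shows "p \<ge> 1 \<and> q < p"
proof (cases "q \<ge> 0")
  case True
  then have "q*r < p*r" using assms(2,5) by (smt (verit) distrib_left mult_nonneg_nonneg)
  then show ?thesis using True assms(1) by (simp add: mult_less_cancel_right)
next
  case False
  then have "p*t > 0" using assms(4,6) by (smt (verit) mult_neg_pos)
  then show ?thesis using False assms(3) by (simp add: zero_less_mult_iff)
qed

lemma coeffs_pos_of_crossed_bounds:
  fixes P Q r1 m1 r2 m2 :: int
  assumes "r1 > 0" "m1 \<ge> 0" "r2 > 0" "m2 \<ge> 0" "Q*r1 < P*(r1 + m1)" "P*r2 < Q*(r2 + m2)"
  shows "P \<ge> 1 \<and> Q \<ge> 1"
proof (rule ccontr)
  assume "\<not> (P \<ge> 1 \<and> Q \<ge> 1)"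
  then have "P \<le> 0 \<or> Q \<le> 0" by auto
  then have "P \<le> 0 \<and> Q \<le> 0"
    using assms by (smt (verit) mult_le_0_iff mult_less_0_iff add_pos_nonneg)
  then have "(P - Q)*r1 > 0" "(Q - P)*r2 > 0"
    using assms by (smt (verit) left_diff_distrib distrib_left mult_nonpos_nonneg)+
  then show False using assms(1,3) by (simp add: zero_less_mult_iff)
qed

lemma unimodular_eq_identity:
  fixes p1 q1 p2 q2 :: int
  assumes "p1 \<ge> 1" "q1 < p1" "q2 \<ge> 1" "p2 < q2" "p1 + p2 \<ge> 1" "q1 + q2 \<ge> 1" "p1*q2 - q1*p2 = 1"
  shows "p1 = 1 \<and> q1 = 0 \<and> p2 = 0 \<and> q2 = 1"
proof (cases "q1*p2 \<le> 0")
  case True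
  have "p1*q2 \<ge> p1" "p1*q2 \<ge> q2" using assms(1,3) by simp_all
  then show ?thesis using True assms by (smt (verit) mult_eq_0_iff)
next
  case False
  then consider "q1 > 0" "p2 > 0" | "q1 < 0" "p2 < 0" by (auto simp: mult_le_0_iff)
  then show ?thesis
  proof cases
    case 1
    have "q1*p2 \<le> (p1 - 1)*(q2 - 1)" using 1 assms by (intro mult_mono) auto
    then show ?thesis using 1 assms by (simp add: algebra_simps)
  next
    case 2
    have "(1 - p2)*(1 - q1) \<le> p1*q2" using 2 assms by (intro mult_mono) auto
    then show ?thesis using 2 assms by (simp add: algebra_simps)
  qed
qed

text \<open>N_i, C_i, R_ij stand for n_i, c_i, r_ij, cast to the integers.\<close>

locale critical_relations =
  fixes N1 N2 N3 C1 C2 C3 R12 R13 R21 R23 R31 R32 :: int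
  assumes N_pos: "N1 > 0" "N2 > 0" "N3 > 0"
    and C_pos: "C1 \<ge> 1" "C2 \<ge> 1" "C3 \<ge> 1"
    and R_nonneg: "R12 \<ge> 0" "R13 \<ge> 0" "R21 \<ge> 0" "R23 \<ge> 0" "R31 \<ge> 0" "R32 \<ge> 0"
    and C1_least: "\<And>k b c. 1 \<le> k \<Longrightarrow> k < C1 \<Longrightarrow> 0 \<le> b \<Longrightarrow> 0 \<le> c \<Longrightarrow> k*N1 \<noteq> b*N2 + c*N3"
    and C2_least: "\<And>k a c. 1 \<le> k \<Longrightarrow> k < C2 \<Longrightarrow> 0 \<le> a \<Longrightarrow> 0 \<le> c \<Longrightarrow> k*N2 \<noteq> a*N1 + c*N3"
    and C3_least: "\<And>k a b. 1 \<le> k \<Longrightarrow> k < C3 \<Longrightarrow> 0 \<le> a \<Longrightarrow> 0 \<le> b \<Longrightarrow> k*N3 \<noteq> a*N1 + b*N2"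
    and rel1: "C1*N1 = R12*N2 + R13*N3"
    and rel2: "C2*N2 = R21*N1 + R23*N3"
    and rel3: "C3*N3 = R31*N1 + R32*N2"
    and Betti_distinct: "C1*N1 \<noteq> C2*N2" "C1*N1 \<noteq> C3*N3" "C2*N2 \<noteq> C3*N3"
begin

text \<open>The two transpositions generate all relabellings of the generators.\<close>

lemma swap12: "critical_relations N2 N1 N3 C2 C1 C3 R21 R23 R12 R13 R32 R31"
  by unfold_locales
    (use N_pos C_pos R_nonneg rel1 rel2 rel3 Betti_distinct in
      \<open>auto simp: add.commute dest: C1_least C2_least C3_least\<close>)

lemma swap13: "critical_relations N3 N2 N1 C3 C2 C1 R32 R31 R23 R21 R13 R12"
  by unfold_locales
    (use N_pos C_pos R_nonneg rel1 rel2 rel3 Betti_distinct in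
      \<open>auto simp: add.commute dest: C1_least C2_least C3_least\<close>)

lemma C2_relation_avoids_N1:
  assumes "C2 \<le> R12" "a \<ge> 0" "c \<ge> 0" "C2*N2 = a*N1 + c*N3"
  shows "a = 0"
proof (rule ccontr)
  assume "a \<noteq> 0"
  have eq: "(C1 - a)*N1 = (R12 - C2)*N2 + (c + R13)*N3"
    using rel1 assms(4) by (simp add: algebra_simps)
  show False
  proof (cases "a < C1")
    case True
    then show False
      using C1_least[of "C1 - a" "R12 - C2" "c + R13"] eq assms \<open>a \<noteq> 0\<close> R_nonneg by auto
  next
    case False
    then have "(C1 - a)*N1 \<le> 0" using N_pos by (simp add: mult_le_0_iff)
    moreover have "(R12 - C2)*N2 \<ge> 0" "(c + R13)*N3 \<ge> 0" using assms R_nonneg N_pos by simp_all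
    ultimately have "(R12 - C2)*N2 = 0" "(c + R13)*N3 = 0" "(C1 - a)*N1 = 0" using eq by linarith+
    then have "c = 0" "C1 = a" using assms(3) R_nonneg N_pos by auto
    then have "C2*N2 = C1*N1" using assms(4) by simp
    then show False using Betti_distinct by simp
  qed
qed

lemma R12_lt_C2: "R12 < C2"
proof (rule ccontr)
  assume "\<not> R12 < C2"
  then have avoid: "a = 0" if "a \<ge> 0" "c \<ge> 0" "C2*N2 = a*N1 + c*N3" for a c
    using C2_relation_avoids_N1 that by simp
  have rel2': "C2*N2 = R23*N3" using rel2 avoid[OF R_nonneg(3,4) rel2] by simp
  moreover have "C2*N2 > 0" using C_pos N_pos by simp
  ultimately have "R23 \<ge> 1" using N_pos by (simp add: zero_less_mult_iff)
  then have "\<not> R23 < C3"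
    using C3_least[of R23 0 C2] C_pos rel2' by (auto simp: algebra_simps)
  moreover have "R23 \<noteq> C3" using Betti_distinct(3) rel2' by auto
  ultimately have R23_gt: "R23 > C3" by linarith
  have eq: "(C2 - R32)*N2 = R31*N1 + (R23 - C3)*N3" using rel2' rel3 by (simp add: algebra_simps)
  moreover have "R31*N1 + (R23 - C3)*N3 > 0" using R_nonneg R23_gt N_pos by (simp add: add_nonneg_pos)
  ultimately have "(C2 - R32)*N2 > 0" by simp
  then have "R32 < C2" using N_pos by (simp add: zero_less_mult_iff)
  then have "R32 = 0"
    using C2_least[of "C2 - R32" R31 "R23 - C3"] eq R_nonneg R23_gt by fastforce
  then have "R31 = 0" using avoid[of R31 "R23 - C3"] eq R_nonneg R23_gt by simp
  then show False using rel3 \<open>R32 = 0\<close> C_pos N_pos by simp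
qed

lemmas R_lt_C = R12_lt_C2 critical_relations.R12_lt_C2[OF swap12]
  critical_relations.R12_lt_C2[OF swap13]
  critical_relations.R12_lt_C2[OF critical_relations.swap12[OF swap13]]
  critical_relations.R12_lt_C2[OF critical_relations.swap13[OF swap12]]
  critical_relations.R12_lt_C2[OF critical_relations.swap12[OF critical_relations.swap13[OF swap12]]]

lemma column_defects_relation:
  "(C1 - R21 - R31)*N1 + (C2 - R12 - R32)*N2 + (C3 - R13 - R23)*N3 = 0"
  using rel1 rel2 rel3 by (simp add: algebra_simps)

lemma first_defect_not_sole_positive:
  assumes "C1 - R21 - R31 > 0" "C2 - R12 - R32 \<le> 0" "C3 - R13 - R23 \<le> 0"
  shows False
proof -
  have "(C1 - R21 - R31)*N1 = (R12 + R32 - C2)*N2 + (R13 + R23 - C3)*N3"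
    using column_defects_relation by (simp add: algebra_simps)
  then have "\<not> C1 - R21 - R31 < C1"
    using C1_least[of "C1 - R21 - R31" "R12 + R32 - C2" "R13 + R23 - C3"] assms by auto
  then have "R21 = 0" "R31 = 0" using R_nonneg by auto
  then have "C2*N2 = R23*N3" "C3*N3 = R32*N2" using rel2 rel3 by auto
  then have "(C2*C3)*(N2*N3) = (R23*R32)*(N2*N3)" by (metis mult.commute mult.left_commute)
  then have "C2*C3 = R23*R32" using N_pos by simp
  moreover have "R23*R32 < C3*C2"
    using R_lt_C R_nonneg by (simp add: mult_strict_mono')
  ultimately show False by (simp add: mult.commute)
qed

lemma third_defect_not_sole_negative:
  assumes "C3 - R13 - R23 < 0" "C1 - R21 - R31 \<ge> 0" "C2 - R12 - R32 \<ge> 0"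
  shows False
proof -
  have "(R13 + R23 - C3)*N3 = (C1 - R21 - R31)*N1 + (C2 - R12 - R32)*N2"
    using column_defects_relation by (simp add: algebra_simps)
  then show False
    using C3_least[of "R13 + R23 - C3" "C1 - R21 - R31" "C2 - R12 - R32"] assms R_lt_C by auto
qed

lemma C_eq_column_sums: "C1 = R21 + R31" "C2 = R12 + R32" "C3 = R13 + R23"
proof -
  note pos = first_defect_not_sole_positive
    critical_relations.first_defect_not_sole_positive[OF swap12]
    critical_relations.first_defect_not_sole_positive[OF swap13]
  note neg = third_defect_not_sole_negative
    critical_relations.third_defect_not_sole_negative[OF swap13]
    critical_relations.third_defect_not_sole_negative[OF critical_relations.swap13[OF swap12]]
  have "C1 - R21 - R31 = 0 \<and> C2 - R12 - R32 = 0 \<and> C3 - R13 - R23 = 0"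
    using sign_pattern_of_relation[OF column_defects_relation N_pos] pos neg by (smt (verit))
  then show "C1 = R21 + R31" "C2 = R12 + R32" "C3 = R13 + R23" by simp_all
qed

lemma R_pos: "R12 > 0" "R13 > 0" "R21 > 0" "R23 > 0" "R31 > 0" "R32 > 0"
  using C_eq_column_sums R_lt_C by linarith+

lemma relation_descent:
  assumes rel: "x*N1 + y*N2 + z*N3 = 0" and signs: "x > 0" "y \<le> 0" "z \<le> 0"
  shows "\<bar>x - C1\<bar>*N1 + \<bar>y + R12\<bar>*N2 + \<bar>z + R13\<bar>*N3 < \<bar>x\<bar>*N1 + \<bar>y\<bar>*N2 + \<bar>z\<bar>*N3"
proof -
  have "x*N1 = (-y)*N2 + (-z)*N3" using rel by (simp add: algebra_simps)
  then have "x \<ge> C1" using C1_least[of x "-y" "-z"] signs by force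
  \<comment> \<open>x loses C1, which outweighs the growth of y and z as C1 N1 = R12 N2 + R13 N3;
    d2 and d3 are the slack in the triangle inequality, positive for a negative coordinate.\<close>
  define d2 where "d2 = R12 + \<bar>y\<bar> - \<bar>y + R12\<bar>"
  define d3 where "d3 = R13 + \<bar>z\<bar> - \<bar>z + R13\<bar>"
  have "y < 0 \<or> z < 0"
  proof (rule ccontr)
    assume "\<not> (y < 0 \<or> z < 0)"
    then have "x*N1 = 0" using rel signs by simp
    then show False using signs N_pos by simp
  qed
  moreover have "d2 \<ge> 0" "y < 0 \<Longrightarrow> d2 > 0" "d3 \<ge> 0" "z < 0 \<Longrightarrow> d3 > 0"
    using R_pos signs unfolding d2_def d3_def by auto
  ultimately have "d2*N2 + d3*N3 > 0"
    using N_pos by (auto intro: add_pos_nonneg add_nonneg_pos)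
  moreover have "\<bar>x\<bar>*N1 + \<bar>y\<bar>*N2 + \<bar>z\<bar>*N3 - (\<bar>x - C1\<bar>*N1 + \<bar>y + R12\<bar>*N2 + \<bar>z + R13\<bar>*N3)
      = d2*N2 + d3*N3"
    using \<open>x \<ge> C1\<close> signs rel1 unfolding d2_def d3_def by (simp add: algebra_simps)
  ultimately show ?thesis by linarith
qed

lemma relation_descent_neg:
  assumes "x*N1 + y*N2 + z*N3 = 0" "x < 0" "y \<ge> 0" "z \<ge> 0"
  shows "\<bar>x + C1\<bar>*N1 + \<bar>y - R12\<bar>*N2 + \<bar>z - R13\<bar>*N3 < \<bar>x\<bar>*N1 + \<bar>y\<bar>*N2 + \<bar>z\<bar>*N3"
  using relation_descent[of "-x" "-y" "-z"] assms by (simp add: abs_minus_commute add.commute)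

lemma relation_reduction:
  assumes "x*N1 + y*N2 + z*N3 = 0" "\<not> (x = 0 \<and> y = 0 \<and> z = 0)"
  shows "\<exists>e f. \<bar>x - e*C1 + f*R21\<bar>*N1 + \<bar>y + e*R12 - f*C2\<bar>*N2 + \<bar>z + e*R13 + f*R23\<bar>*N3
    < \<bar>x\<bar>*N1 + \<bar>y\<bar>*N2 + \<bar>z\<bar>*N3"
proof -
  have rel': "y*N2 + x*N1 + z*N3 = 0" "z*N3 + y*N2 + x*N1 = 0" using assms(1) by (simp_all add: ac_simps)
  note down2 = critical_relations.relation_descent[OF swap12 rel'(1)]
    critical_relations.relation_descent_neg[OF swap12 rel'(1)]
  note down3 = critical_relations.relation_descent[OF swap13 rel'(2)]
    critical_relations.relation_descent_neg[OF swap13 rel'(2)]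
  \<comment> \<open>For the third coordinate take e = f: the first two relation vectors add up to (R31, R32, -C3).\<close>
  note sums = C_eq_column_sums
  from sign_pattern_of_relation[OF assms(1) N_pos] assms(2) consider
      "x > 0" "y \<le> 0" "z \<le> 0" | "x < 0" "y \<ge> 0" "z \<ge> 0"
    | "y > 0" "x \<le> 0" "z \<le> 0" | "y < 0" "x \<ge> 0" "z \<ge> 0"
    | "z > 0" "x \<le> 0" "y \<le> 0" | "z < 0" "x \<ge> 0" "y \<ge> 0"
    by blast
  then show ?thesis
  proof cases
    case 1
    then show ?thesis using relation_descent[OF assms(1)] by (intro exI[of _ 1] exI[of _ 0]) simp
  next
    case 2
    then show ?thesis using relation_descent_neg[OF assms(1)] by (intro exI[of _ "-1"] exI[of _ 0]) simp
  next
    case 3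
    then show ?thesis using down2(1) by (intro exI[of _ 0] exI[of _ 1]) (simp add: ac_simps)
  next
    case 4
    then show ?thesis using down2(2) by (intro exI[of _ 0] exI[of _ "-1"]) (simp add: ac_simps)
  next
    case 5
    then show ?thesis using down3(1) sums by (intro exI[of _ "-1"] exI[of _ "-1"]) (simp add: algebra_simps)
  next
    case 6
    then show ?thesis using down3(2) sums by (intro exI[of _ 1] exI[of _ 1]) (simp add: algebra_simps)
  qed
qed

lemma relation_in_span:
  "x*N1 + y*N2 + z*N3 = 0 \<Longrightarrow> \<exists>p q. x = p*C1 - q*R21 \<and> y = q*C2 - p*R12 \<and> z = - p*R13 - q*R23"
proof (induction "nat (\<bar>x\<bar>*N1 + \<bar>y\<bar>*N2 + \<bar>z\<bar>*N3)" arbitrary: x y z rule: less_induct)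
  case less
  show ?case
  proof (cases "x = 0 \<and> y = 0 \<and> z = 0")
    case True
    then show ?thesis by (intro exI[of _ 0]) simp
  next
    case False
    then obtain e f where smaller: "\<bar>x - e*C1 + f*R21\<bar>*N1 + \<bar>y + e*R12 - f*C2\<bar>*N2 + \<bar>z + e*R13 + f*R23\<bar>*N3
        < \<bar>x\<bar>*N1 + \<bar>y\<bar>*N2 + \<bar>z\<bar>*N3"
      using relation_reduction less.prems by blast
    have "(x - e*C1 + f*R21)*N1 + (y + e*R12 - f*C2)*N2 + (z + e*R13 + f*R23)*N3
        = (x*N1 + y*N2 + z*N3) - e*(C1*N1 - R12*N2 - R13*N3) - f*(C2*N2 - R21*N1 - R23*N3)"
      by (simp add: algebra_simps)
    also have "\<dots> = 0" using less.prems rel1 rel2 by simp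
    finally have "(x - e*C1 + f*R21)*N1 + (y + e*R12 - f*C2)*N2 + (z + e*R13 + f*R23)*N3 = 0" .
    moreover have "nat (\<bar>x - e*C1 + f*R21\<bar>*N1 + \<bar>y + e*R12 - f*C2\<bar>*N2 + \<bar>z + e*R13 + f*R23\<bar>*N3)
        < nat (\<bar>x\<bar>*N1 + \<bar>y\<bar>*N2 + \<bar>z\<bar>*N3)"
      using smaller N_pos by (subst nat_less_eq_zless) simp_all
    ultimately obtain p q where "x - e*C1 + f*R21 = p*C1 - q*R21" "y + e*R12 - f*C2 = q*C2 - p*R12"
        "z + e*R13 + f*R23 = - p*R13 - q*R23"
      using less.hyps by blast
    then show ?thesis by (intro exI[of _ "p + e"] exI[of _ "q + f"]) (simp add: algebra_simps)
  qed
qed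

lemma minors_proportional:
  "(R12*R13 + R12*R23 + R13*R32)*N2 = (R13*R21 + R21*R23 + R23*R31)*N1"
  "(R12*R13 + R12*R23 + R13*R32)*N3 = (R12*R31 + R21*R32 + R31*R32)*N1"
  "(R13*R21 + R21*R23 + R23*R31)*N3 = (R12*R31 + R21*R32 + R31*R32)*N2"
  using rel1 rel2 C_eq_column_sums by algebra+

lemma span_cross_first:
  assumes "y = q*C2 - p*R12" "z = - p*R13 - q*R23"
  shows "R13*y - R12*z = q*(R12*R13 + R12*R23 + R13*R32)"
  unfolding assms C_eq_column_sums(2) by (simp add: algebra_simps)

lemma first_row_divisible:
  assumes "R12*R13 + R12*R23 + R13*R32 = d*N1"
  shows "d dvd R12" "d dvd R13" "d dvd C1"
proof -
  \<comment> \<open>R13 y - R12 z is a multiple of d N1 for every relation (x, y, z); apply this to three.\<close>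
  have "N3*N1 + 0*N2 + (-N1)*N3 = 0" "(-N2)*N1 + N1*N2 + 0*N3 = 0" "0*N1 + N3*N2 + (-N2)*N3 = 0"
    by simp_all
  then obtain q q' q'' where
      "R13*0 - R12*(-N1) = q*(d*N1)" "R13*N1 - R12*0 = q'*(d*N1)" "R13*N3 - R12*(-N2) = q''*(d*N1)"
    using relation_in_span span_cross_first assms by metis
  then have "R12*N1 = (q*d)*N1" "R13*N1 = (q'*d)*N1" "C1*N1 = (q''*d)*N1"
    using rel1 by (simp_all add: algebra_simps)
  then have "R12 = q*d" "R13 = q'*d" "C1 = q''*d" using N_pos by simp_all
  then show "d dvd R12" "d dvd R13" "d dvd C1" by simp_all
qed

lemma first_relation_primitive:
  assumes "d > 0" "d dvd C1" "d dvd R12" "d dvd R13"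
  shows "d = 1"
proof (rule ccontr)
  assume "d \<noteq> 1"
  obtain k b c where kbc: "C1 = d*k" "R12 = d*b" "R13 = d*c" using assms(2-4) by (meson dvdE)
  have "d*k > 0" using kbc(1) C_pos(1) by simp
  then have "k > 0" using assms(1) by (simp add: zero_less_mult_iff)
  moreover have "b \<ge> 0" "c \<ge> 0" using kbc R_nonneg assms(1) by (auto simp: zero_le_mult_iff)
  moreover have "k < C1" using kbc(1) \<open>d \<noteq> 1\<close> \<open>k > 0\<close> assms(1) by (simp add: mult_less_cancel_right1)
  moreover have "d*(k*N1) = d*(b*N2 + c*N3)" using rel1 kbc by (simp add: algebra_simps)
  then have "k*N1 = b*N2 + c*N3" using assms(1) by simp
  ultimately show False using C1_least[of k b c] by simp
qed

lemma N_eq_minors: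
  assumes "gcd N1 (gcd N2 N3) = 1"
  shows "N1 = R12*R13 + R12*R23 + R13*R32" "N2 = R13*R21 + R21*R23 + R23*R31"
    "N3 = R12*R31 + R21*R32 + R31*R32"
proof -
  obtain d where d: "R12*R13 + R12*R23 + R13*R32 = d*N1" "R13*R21 + R21*R23 + R23*R31 = d*N2"
      "R12*R31 + R21*R32 + R31*R32 = d*N3"
    using proportional_to_coprime_triple[OF minors_proportional assms] by blast
  have "R12*R13 + R12*R23 + R13*R32 > 0" using R_pos by (simp add: add_pos_pos)
  then have "d > 0" using d(1) N_pos by (simp add: zero_less_mult_iff)
  then have "d = 1" using first_relation_primitive first_row_divisible[OF d(1)] by blast
  then show "N1 = R12*R13 + R12*R23 + R13*R32" "N2 = R13*R21 + R21*R23 + R23*R31"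
    "N3 = R12*R31 + R21*R32 + R31*R32" using d by simp_all
qed

lemma minors_determine_matrix:
  assumes coprime: "gcd N1 (gcd N2 N3) = 1"
    and pos: "a12 > 0" "a13 > 0" "a21 > 0" "a23 > 0" "a31 > 0" "a32 > 0"
    and N1_eq: "N1 = a12*a13 + a12*a23 + a13*a32"
    and N2_eq: "N2 = a13*a21 + a21*a23 + a23*a31"
    and N3_eq: "N3 = a12*a31 + a21*a32 + a31*a32"
  shows "a12 = R12 \<and> a13 = R13 \<and> a21 = R21 \<and> a23 = R23 \<and> a31 = R31 \<and> a32 = R32"
proof -
  note sums = C_eq_column_sums
  have "(a21 + a31)*N1 + (-a12)*N2 + (-a13)*N3 = 0" "(-a21)*N1 + (a12 + a32)*N2 + (-a23)*N3 = 0"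
    unfolding N1_eq N2_eq N3_eq by (simp_all add: algebra_simps)
  then obtain p1 q1 p2 q2 where
      row1: "a21 + a31 = p1*C1 - q1*R21" "-a12 = q1*C2 - p1*R12" "-a13 = - p1*R13 - q1*R23" and
      row2: "-a21 = p2*C1 - q2*R21" "a12 + a32 = q2*C2 - p2*R12" "-a23 = - p2*R13 - q2*R23"
    using relation_in_span by meson
  have "(p1*q2 - q1*p2)*N1 = (-a12)*(-a23) - (-a13)*(a12 + a32)"
    unfolding row1(2,3) row2(2,3) sums N_eq_minors(1)[OF coprime] by (simp add: algebra_simps)
  also have "\<dots> = 1*N1" unfolding N1_eq by (simp add: algebra_simps)
  finally have det: "p1*q2 - q1*p2 = 1" using N_pos by simp
  have "p1 \<ge> 1 \<and> q1 < p1"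
    by (rule coeffs_pos_and_ordered[of R12 R32 R13 R23])
      (use row1 pos sums R_pos R_nonneg in \<open>simp_all add: algebra_simps\<close>)
  moreover have "q2 \<ge> 1 \<and> p2 < q2"
    by (rule coeffs_pos_and_ordered[of R21 R31 R23 R13])
      (use row2 pos sums R_pos R_nonneg in \<open>simp_all add: algebra_simps\<close>)
  moreover have "p1 + p2 \<ge> 1 \<and> q1 + q2 \<ge> 1"
    by (rule coeffs_pos_of_crossed_bounds[of R21 R31 R12 R32])
      (use row1 row2 pos sums R_pos R_nonneg in \<open>simp_all add: algebra_simps\<close>)
  ultimately have "p1 = 1 \<and> q1 = 0 \<and> p2 = 0 \<and> q2 = 1"
    using unimodular_eq_identity det by blast
  then show ?thesis using row1 row2 sums by auto
qed

lemma first_relation_unique: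
  assumes "b \<ge> 0" "c \<ge> 0" "C1*N1 = b*N2 + c*N3"
  shows "b = R12 \<and> c = R13"
proof -
  \<comment> \<open>(b, c) may replace (R12, R13) in all hypotheses, and C2 = R12 + R32, C3 = R13 + R23.\<close>
  interpret other: critical_relations N1 N2 N3 C1 C2 C3 b c R21 R23 R31 R32
    by unfold_locales
      (fact N_pos C_pos assms R_nonneg C1_least C2_least C3_least rel2 rel3 Betti_distinct)+
  show ?thesis using C_eq_column_sums other.C_eq_column_sums by simp
qed

end


section \<open>Betti elements of a three-generated monoid\<close>

lemma lincomb_3: "lincomb n a = a$1 * n$1 + a$2 * n$2 + a$3 * n$3"
  by (simp add: lincomb_def sum_3)

lemma dotp_3: "dotp u v = u$1 * v$1 + u$2 * v$2 + u$3 * v$3"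
  by (simp add: dotp_def sum_3)

lemma UNIV_3_eq_distinct: "i \<noteq> j \<Longrightarrow> i \<noteq> l \<Longrightarrow> j \<noteq> l \<Longrightarrow> (UNIV :: 3 set) = {i, j, l}"
  using exhaust_3[of i] exhaust_3[of j] exhaust_3[of l] by (auto simp: UNIV_3)

lemma lincomb_distinct_3:
  "i \<noteq> j \<Longrightarrow> i \<noteq> l \<Longrightarrow> j \<noteq> l \<Longrightarrow> lincomb n a = a$i * n$i + a$j * n$j + a$l * n$l"
  by (simp add: lincomb_def UNIV_3_eq_distinct)

lemma vec_eq_distinct_3:
  fixes a b :: "'a ^ 3"
  assumes "i \<noteq> j" "i \<noteq> l" "j \<noteq> l"
  shows "a = b \<longleftrightarrow> a$i = b$i \<and> a$j = b$j \<and> a$l = b$l"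
proof -
  have "x = i \<or> x = j \<or> x = l" for x using UNIV_3_eq_distinct[OF assms] by blast
  then show ?thesis unfolding vec_eq_iff by (metis (mono_tags))
qed

lemma lincomb_axis: "lincomb n (axis i m) = m * n$i"
  using exhaust_3[of i] by (auto simp: lincomb_3 axis_def)

lemma dotp_axis: "dotp (axis i m) w = m * w$i"
  using exhaust_3[of i] by (auto simp: dotp_3 axis_def)

lemma dotp_commute: "dotp u v = dotp v u"
  by (simp add: dotp_def mult.commute)

lemma lincomb_add: "lincomb n (a + b) = lincomb n a + lincomb n b"
  by (simp add: lincomb_def sum.distrib algebra_simps)

lemma lincomb_eq_0_iff:
  assumes "\<And>i. n$i > 0"
  shows "lincomb n a = 0 \<longleftrightarrow> a = 0"
  using assms by (auto simp: lincomb_def vec_eq_iff) (metis gr_implies_not0)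

lemma minimal_gens3_pos:
  assumes "minimal_gens3 n"
  shows "n$i > 0"
proof -
  have "\<not> ((0 :: nat^3)$i = 0 \<and> lincomb n 0 = n$i)" using assms unfolding minimal_gens3_def by blast
  then show ?thesis by (simp add: lincomb_def)
qed

lemma lincomb_drop_index:
  "lincomb n w = lincomb n (\<chi> l. if l = i then 0 else w$l) + w$i * n$i"
  using exhaust_3[of i] by (auto simp: lincomb_3)

lemma c_coef_le:
  assumes "lincomb n a = k * n$i" "a$i = 0" "k \<ge> 1"
  shows "c_coef n i \<le> k"
  unfolding c_coef_def using assms by (intro Least_le) (auto simp: factorizations_def)

lemma c_coef_witness:
  assumes pos: "\<And>j. n$j > 0"
  shows "c_coef n i \<ge> 1 \<and> (\<exists>a. lincomb n a = c_coef n i * n$i \<and> a$i = 0)"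
proof -
  let ?P = "\<lambda>k. k \<ge> 1 \<and> (\<exists>a\<in>factorizations n (k * n$i). a$i = 0)"
  define j :: 3 where "j = (if i = 1 then 2 else 1)"
  have "j \<noteq> i" unfolding j_def by auto
  then have "axis j (n$i) $ i = 0" by (simp add: axis_def)
  moreover have "lincomb n (axis j (n$i)) = n$j * n$i" by (simp add: lincomb_axis mult.commute)
  ultimately have "?P (n$j)" using pos[of j] by (auto simp: factorizations_def Suc_le_eq)
  then have "?P (c_coef n i)" unfolding c_coef_def by (rule LeastI)
  then show ?thesis by (auto simp: factorizations_def)
qed

lemma axis_c_coef_isolated:
  assumes pos: "\<And>j. n$j > 0"
  shows "(axis i (c_coef n i), w) \<notin> nabla_edges n (c_coef n i * n$i)"
proof
  let ?C = "c_coef n i" and ?w' = "\<chi> l. if l = i then 0 else w$l"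
  assume "(axis i ?C, w) \<in> nabla_edges n (?C * n$i)"
  then have w: "lincomb n w = ?C * n$i" "w \<noteq> axis i ?C" "w$i > 0"
    by (auto simp: nabla_edges_def factorizations_def dotp_axis)
  have split: "lincomb n ?w' + w$i * n$i = ?C * n$i" using lincomb_drop_index[of n w i] w(1) by simp
  show False
  proof (cases "w$i < ?C")
    case True
    then have "lincomb n ?w' = (?C - w$i) * n$i" using split by (simp add: diff_mult_distrib)
    then have "?C \<le> ?C - w$i" using c_coef_le[of n ?w' "?C - w$i" i] True by simp
    then show False using w(3) True by simp
  next
    case False
    then have "w$i * n$i \<ge> ?C * n$i" by simp
    then have "lincomb n ?w' = 0" "w$i * n$i = ?C * n$i" using split by linarith+
    then have "lincomb n ?w' = 0" "w$i = ?C" using pos[of i] by simp_all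
    then have "?w' = 0" using lincomb_eq_0_iff pos by blast
    then have "w = axis i ?C" using \<open>w$i = ?C\<close> by (auto simp: vec_eq_iff axis_def split: if_splits)
    then show False using w(2) by simp
  qed
qed

lemma is_Betti_c_coef:
  assumes pos: "\<And>j. n$j > 0"
  shows "is_Betti n (c_coef n i * n$i)"
proof -
  let ?x = "c_coef n i * n$i" and ?s = "axis i (c_coef n i)"
  obtain r where r: "lincomb n r = ?x" "r$i = 0" and "c_coef n i \<ge> 1" using c_coef_witness[OF pos] by blast
  then have "r \<noteq> ?s" by auto
  moreover have "(?s, t) \<in> (nabla_edges n ?x)\<^sup>* \<Longrightarrow> t = ?s" for t
    using axis_c_coef_isolated[OF pos] by (auto elim: converse_rtranclE)
  moreover have "?s \<in> factorizations n ?x" by (simp add: factorizations_def lincomb_axis)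
  ultimately show ?thesis using r
    unfolding is_Betti_def monoid3_def factorizations_def by blast
qed

lemma two_nonzero_of_not_axis:
  fixes u :: "nat^3"
  assumes "\<And>i m. u \<noteq> axis i m"
  shows "(u$1 \<noteq> 0 \<and> u$2 \<noteq> 0) \<or> (u$1 \<noteq> 0 \<and> u$3 \<noteq> 0) \<or> (u$2 \<noteq> 0 \<and> u$3 \<noteq> 0)"
proof (rule ccontr)
  assume "\<not> ?thesis"
  then have "u = axis 1 (u$1) \<or> u = axis 2 (u$2) \<or> u = axis 3 (u$3)"
    by (auto simp: vec_eq_iff forall_3 axis_def)
  then show False using assms by blast
qed

lemma dotp_ne_0_of_not_axis:
  assumes "\<And>i m. u \<noteq> axis i m" "\<And>i m. v \<noteq> axis i m"
  shows "dotp u v \<noteq> 0"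
  using two_nonzero_of_not_axis[OF assms(1)] two_nonzero_of_not_axis[OF assms(2)]
  by (auto simp: dotp_3)

lemma sym_nabla_edges: "sym (nabla_edges n x)"
  by (auto simp: sym_def nabla_edges_def dotp_commute)

lemma nabla_connected:
  assumes pos: "\<And>j. n$j > 0"
    and no_isolated: "\<And>i m. axis i m \<in> factorizations n x \<Longrightarrow>
      \<exists>w\<in>factorizations n x. w \<noteq> axis i m \<and> dotp (axis i m) w \<noteq> 0"
    and u: "u \<in> factorizations n x" and v: "v \<in> factorizations n x"
  shows "(u, v) \<in> (nabla_edges n x)\<^sup>*"
proof -
  let ?F = "factorizations n x" and ?E = "nabla_edges n x"
  have reach_non_axis: "\<exists>b\<in>?F. (\<forall>i m. b \<noteq> axis i m) \<and> (s, b) \<in> ?E\<^sup>*" if s: "s \<in> ?F" for s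
  proof (cases "\<exists>i m. s = axis i m")
    case True
    then obtain i m where sm: "s = axis i m" by blast
    then obtain w where w: "w \<in> ?F" "w \<noteq> s" "dotp s w \<noteq> 0" using no_isolated s by blast
    have "w \<noteq> axis j m'" for j m'
    proof
      assume wm: "w = axis j m'"
      then have "m * (axis j m' $ i) \<noteq> 0" using w(3) sm by (simp add: dotp_axis)
      then have "i = j" by (auto simp: axis_def split: if_splits)
      then have "m * n$i = m' * n$i" using s w(1) sm wm by (simp add: factorizations_def lincomb_axis)
      then show False using w(2) sm wm \<open>i = j\<close> pos[of i] by simp
    qed
    moreover have "(s, w) \<in> ?E" using s w unfolding nabla_edges_def by auto
    ultimately show ?thesis using w(1) by blast
  qed (use s in blast)
  obtain bu where bu: "bu \<in> ?F" "\<forall>i m. bu \<noteq> axis i m" "(u, bu) \<in> ?E\<^sup>*" using reach_non_axis[OF u] by blast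
  obtain bv where bv: "bv \<in> ?F" "\<forall>i m. bv \<noteq> axis i m" "(v, bv) \<in> ?E\<^sup>*" using reach_non_axis[OF v] by blast
  have "(bu, bv) \<in> ?E\<^sup>*"
    using bu bv dotp_ne_0_of_not_axis[of bu bv] unfolding nabla_edges_def by (cases "bu = bv") auto
  moreover have "(bv, v) \<in> ?E\<^sup>*" by (rule symD[OF sym_rtrancl[OF sym_nabla_edges] bv(3)])
  ultimately show ?thesis using bu(3) by (meson rtrancl_trans)
qed

lemma isolated_axis_eq_c_coef:
  assumes pos: "\<And>j. n$j > 0"
    and s: "axis i m \<in> factorizations n x"
    and t: "t \<in> factorizations n x" "t \<noteq> axis i m"
    and isolated: "\<And>w. w \<in> factorizations n x \<Longrightarrow> w \<noteq> axis i m \<Longrightarrow> dotp (axis i m) w = 0"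
  shows "m = c_coef n i"
proof -
  have x: "x = m * n$i" using s by (simp add: factorizations_def lincomb_axis)
  have "m \<noteq> 0"
  proof
    assume "m = 0"
    then have "t = 0" using t(1) x lincomb_eq_0_iff[OF pos] by (simp add: factorizations_def)
    then show False using t(2) \<open>m = 0\<close> by (simp add: axis_def vec_eq_iff)
  qed
  then have "t$i = 0" using isolated[OF t] by (simp add: dotp_axis)
  then have le: "c_coef n i \<le> m"
    using t(1) x \<open>m \<noteq> 0\<close> by (intro c_coef_le[of n t]) (auto simp: factorizations_def)
  have "\<not> c_coef n i < m"
  proof
    assume lt: "c_coef n i < m"
    obtain r where r: "lincomb n r = c_coef n i * n$i" "r$i = 0" "c_coef n i \<ge> 1"
      using c_coef_witness[OF pos] by blast
    let ?w = "r + axis i (m - c_coef n i)"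
    have "lincomb n ?w = m * n$i" using lt r(1) by (simp add: lincomb_add lincomb_axis add_mult_distrib[symmetric])
    moreover have "?w \<noteq> axis i m"
    proof
      assume "?w = axis i m"
      then have "r = 0" using r(2) lt by (auto simp: vec_eq_iff axis_def split: if_splits)
      then show False using r(1,3) pos[of i] by (simp add: lincomb_def)
    qed
    moreover have "dotp (axis i m) ?w \<noteq> 0" using \<open>m \<noteq> 0\<close> lt r(2) by (simp add: dotp_axis)
    ultimately show False using isolated x by (simp add: factorizations_def)
  qed
  then show ?thesis using le by simp
qed

lemma Betti_eq_c_coef:
  assumes pos: "\<And>j. n$j > 0" and Betti: "is_Betti n x"
  shows "\<exists>i. x = c_coef n i * n$i"
proof -
  obtain u v where uv: "u \<in> factorizations n x" "v \<in> factorizations n x" "(u, v) \<notin> (nabla_edges n x)\<^sup>*"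
    using Betti unfolding is_Betti_def by blast
  then obtain i m where s: "axis i m \<in> factorizations n x"
    and isolated: "\<And>w. w \<in> factorizations n x \<Longrightarrow> w \<noteq> axis i m \<Longrightarrow> dotp (axis i m) w = 0"
    using nabla_connected[OF pos] by blast
  obtain t where "t \<in> factorizations n x" "t \<noteq> axis i m" using uv by (metis rtrancl.rtrancl_refl)
  then have "m = c_coef n i" using isolated_axis_eq_c_coef[OF pos s] isolated by blast
  then show ?thesis using s by (auto simp: factorizations_def lincomb_axis)
qed

lemma Betti_elements_eq:
  assumes "\<And>j. n$j > 0"
  shows "Betti_elements n = range (\<lambda>i. c_coef n i * n$i)"
  using Betti_eq_c_coef[OF assms] is_Betti_c_coef[OF assms] unfolding Betti_elements_def by blast

lemma three_Betti_elements_distinct: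
  assumes "\<And>j. n$j > 0" "card (Betti_elements n) = 3" "i \<noteq> j"
  shows "c_coef n i * n$i \<noteq> c_coef n j * n$j"
proof -
  have "card (range (\<lambda>i. c_coef n i * n$i)) = card (UNIV :: 3 set)"
    using assms(2) unfolding Betti_elements_eq[OF assms(1)] by simp
  then have "inj (\<lambda>i. c_coef n i * n$i)" by (intro eq_card_imp_inj_on) simp_all
  then show ?thesis using assms(3) by (auto dest: injD)
qed

lemma numerical_gcd_eq_1:
  assumes "is_numerical n"
  shows "gcd (n$1) (gcd (n$2) (n$3)) = 1"
proof -
  let ?g = "gcd (n$1) (gcd (n$2) (n$3))"
  obtain N where "\<forall>x \<in> UNIV - monoid3 n. x < N"
    using assms unfolding is_numerical_def finite_nat_set_iff_bounded by blast
  then have N: "x \<in> monoid3 n" if "x \<ge> N" for x using that by (meson DiffI UNIV_I not_le)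
  have "?g dvd n$1" "?g dvd n$2" "?g dvd n$3" by (meson gcd_dvd1 gcd_dvd2 dvd_trans)+
  then have "?g dvd x" if "x \<in> monoid3 n" for x
    using that unfolding monoid3_def lincomb_3 by (auto intro!: dvd_add dvd_mult)
  then have "?g dvd N" "?g dvd N + 1" using N by simp_all
  then have "?g dvd 1" using dvd_add_right_iff by blast
  then show ?thesis by simp
qed


section \<open>Monoids with three Betti elements\<close>

lemma c_coef_least_int:
  assumes "i \<noteq> j" "i \<noteq> l" "j \<noteq> l" "1 \<le> k" "k < int (c_coef n i)" "0 \<le> b" "0 \<le> c"
  shows "k * int (n$i) \<noteq> b * int (n$j) + c * int (n$l)"
proof
  assume "k * int (n$i) = b * int (n$j) + c * int (n$l)"
  then have "int (nat k * n$i) = int (nat b * n$j + nat c * n$l)" using assms(4,6,7) by simp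
  then have eq: "nat k * n$i = nat b * n$j + nat c * n$l" by (simp only: of_nat_eq_iff)
  let ?a = "\<chi> t. if t = j then nat b else if t = l then nat c else 0"
  have "lincomb n ?a = nat k * n$i" "?a$i = 0"
    using assms(1-3) eq by (simp_all add: lincomb_distinct_3[of i j l])
  then have "c_coef n i \<le> nat k" using assms(4) by (intro c_coef_le) auto
  then show False using assms(4,5) by (simp add: le_nat_iff)
qed

lemma critical_relations_of_factorizations:
  assumes mg: "minimal_gens3 n" and three: "card (Betti_elements n) = 3"
    and ijl: "i \<noteq> j" "i \<noteq> l" "j \<noteq> l"
    and ai: "lincomb n ai = c_coef n i * n$i" "ai$i = 0"
    and aj: "lincomb n aj = c_coef n j * n$j" "aj$j = 0"
    and al: "lincomb n al = c_coef n l * n$l" "al$l = 0"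
  shows "critical_relations (int (n$i)) (int (n$j)) (int (n$l))
    (int (c_coef n i)) (int (c_coef n j)) (int (c_coef n l))
    (int (ai$j)) (int (ai$l)) (int (aj$i)) (int (aj$l)) (int (al$i)) (int (al$j))"
proof unfold_locales
  have pos: "\<And>t. n$t > 0" using minimal_gens3_pos[OF mg] .
  show "int (n$i) > 0" "int (n$j) > 0" "int (n$l) > 0" using pos by simp_all
  show "int (c_coef n i) \<ge> 1" "int (c_coef n j) \<ge> 1" "int (c_coef n l) \<ge> 1"
    using c_coef_witness[OF pos] by simp_all
  show "int (ai$j) \<ge> 0" "int (ai$l) \<ge> 0" "int (aj$i) \<ge> 0" "int (aj$l) \<ge> 0" "int (al$i) \<ge> 0"
    "int (al$j) \<ge> 0" by simp_all
  show "\<And>k b c. 1 \<le> k \<Longrightarrow> k < int (c_coef n i) \<Longrightarrow> 0 \<le> b \<Longrightarrow> 0 \<le> c \<Longrightarrow>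
      k * int (n$i) \<noteq> b * int (n$j) + c * int (n$l)"
    "\<And>k a c. 1 \<le> k \<Longrightarrow> k < int (c_coef n j) \<Longrightarrow> 0 \<le> a \<Longrightarrow> 0 \<le> c \<Longrightarrow>
      k * int (n$j) \<noteq> a * int (n$i) + c * int (n$l)"
    "\<And>k a b. 1 \<le> k \<Longrightarrow> k < int (c_coef n l) \<Longrightarrow> 0 \<le> a \<Longrightarrow> 0 \<le> b \<Longrightarrow>
      k * int (n$l) \<noteq> a * int (n$i) + b * int (n$j)"
    using c_coef_least_int ijl by metis+
  show "int (c_coef n i) * int (n$i) = int (ai$j) * int (n$j) + int (ai$l) * int (n$l)"
    "int (c_coef n j) * int (n$j) = int (aj$i) * int (n$i) + int (aj$l) * int (n$l)"
    "int (c_coef n l) * int (n$l) = int (al$i) * int (n$i) + int (al$j) * int (n$j)"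
    using ai aj al ijl lincomb_distinct_3
    by (metis (no_types, lifting) add_0 mult_zero_left of_nat_add of_nat_mult)+
  show "int (c_coef n i) * int (n$i) \<noteq> int (c_coef n j) * int (n$j)"
    "int (c_coef n i) * int (n$i) \<noteq> int (c_coef n l) * int (n$l)"
    "int (c_coef n j) * int (n$j) \<noteq> int (c_coef n l) * int (n$l)"
    using three_Betti_elements_distinct[OF pos three] ijl by (simp_all only: of_nat_mult[symmetric] of_nat_eq_iff) blast+
qed


lemma r_coef_eq:
  assumes mg: "minimal_gens3 n" and three: "card (Betti_elements n) = 3"
    and ijl: "i \<noteq> j" "i \<noteq> l" "j \<noteq> l"
    and a: "lincomb n a = c_coef n i * n$i" "a$i = 0"
  shows "r_coef n i j = a$j"
proof -
  have pos: "\<And>t. n$t > 0" using minimal_gens3_pos[OF mg] .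
  obtain aj al where aj: "lincomb n aj = c_coef n j * n$j" "aj$j = 0"
    and al: "lincomb n al = c_coef n l * n$l" "al$l = 0"
    using c_coef_witness[OF pos] by metis
  interpret critical_relations "int (n$i)" "int (n$j)" "int (n$l)"
    "int (c_coef n i)" "int (c_coef n j)" "int (c_coef n l)"
    "int (a$j)" "int (a$l)" "int (aj$i)" "int (aj$l)" "int (al$i)" "int (al$j)"
    by (rule critical_relations_of_factorizations[OF mg three ijl a aj al])
  have "(THE b. b \<in> factorizations n (c_coef n i * n$i) \<and> b$i = 0) = a"
  proof (rule the_equality)
    show "a \<in> factorizations n (c_coef n i * n$i) \<and> a$i = 0" using a by (simp add: factorizations_def)
  next
    fix b assume "b \<in> factorizations n (c_coef n i * n$i) \<and> b$i = 0"
    then have "c_coef n i * n$i = b$j * n$j + b$l * n$l" "b$i = 0"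
      using lincomb_distinct_3[OF ijl, of n b] by (auto simp: factorizations_def)
    moreover from this(1) have "int (c_coef n i) * int (n$i) = int (b$j) * int (n$j) + int (b$l) * int (n$l)"
      by (metis of_nat_add of_nat_mult)
    ultimately show "b = a" using first_relation_unique[of "int (b$j)" "int (b$l)"] a(2)
      by (simp add: vec_eq_distinct_3[OF ijl])
  qed
  then show ?thesis unfolding r_coef_def by simp
qed

lemma critical_relations_r_coef:
  assumes mg: "minimal_gens3 n" and three: "card (Betti_elements n) = 3"
  shows "critical_relations (int (n$1)) (int (n$2)) (int (n$3))
    (int (c_coef n 1)) (int (c_coef n 2)) (int (c_coef n 3))
    (int (r_coef n 1 2)) (int (r_coef n 1 3)) (int (r_coef n 2 1))
    (int (r_coef n 2 3)) (int (r_coef n 3 1)) (int (r_coef n 3 2))"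
proof -
  have pos: "\<And>t. n$t > 0" using minimal_gens3_pos[OF mg] .
  have distinct: "(1::3) \<noteq> 2" "(1::3) \<noteq> 3" "(2::3) \<noteq> 3" by simp_all
  obtain a1 a2 a3 where a1: "lincomb n a1 = c_coef n 1 * n$1" "a1$1 = 0"
    and a2: "lincomb n a2 = c_coef n 2 * n$2" "a2$2 = 0"
    and a3: "lincomb n a3 = c_coef n 3 * n$3" "a3$3 = 0"
    using c_coef_witness[OF pos] by metis
  have "r_coef n 1 2 = a1$2" "r_coef n 1 3 = a1$3" "r_coef n 2 1 = a2$1" "r_coef n 2 3 = a2$3"
    "r_coef n 3 1 = a3$1" "r_coef n 3 2 = a3$2"
    using r_coef_eq[OF mg three] distinct a1 a2 a3 by (metis (no_types))+
  then show ?thesis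
    using critical_relations_of_factorizations[OF mg three distinct a1 a2 a3] by simp
qed


lemma A_gens_nth:
  "A_gens a $ 1 = a$1$2 * a$1$3 + a$1$2 * a$2$3 + a$1$3 * a$3$2"
  "A_gens a $ 2 = a$1$3 * a$2$1 + a$2$1 * a$2$3 + a$2$3 * a$3$1"
  "A_gens a $ 3 = a$1$2 * a$3$1 + a$2$1 * a$3$2 + a$3$1 * a$3$2"
  by (simp_all add: A_gens_def)

lemma r_matrix_nth: "r_matrix n $ i $ j = (if i = j then 0 else r_coef n i j)"
  by (simp add: r_matrix_def)

lemma X_set_r_matrix:
  assumes "n \<in> X_set"
  shows "r_matrix n \<in> Y_set \<and> A_gens (r_matrix n) = n"
proof -
  have num: "is_numerical n" and mg: "minimal_gens3 n" and three: "card (Betti_elements n) = 3"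
    using assms unfolding X_set_def by auto
  interpret critical_relations "int (n$1)" "int (n$2)" "int (n$3)"
    "int (c_coef n 1)" "int (c_coef n 2)" "int (c_coef n 3)"
    "int (r_coef n 1 2)" "int (r_coef n 1 3)" "int (r_coef n 2 1)"
    "int (r_coef n 2 3)" "int (r_coef n 3 1)" "int (r_coef n 3 2)"
    by (rule critical_relations_r_coef[OF mg three])
  have "gcd (int (n$1)) (gcd (int (n$2)) (int (n$3))) = 1"
    using numerical_gcd_eq_1[OF num] by simp
  from N_eq_minors[OF this] have "A_gens (r_matrix n) = n"
    unfolding vec_eq_iff forall_3 A_gens_nth r_matrix_nth by (simp flip: of_nat_mult of_nat_add)
  moreover have "\<forall>i j. i \<noteq> j \<longrightarrow> r_matrix n $ i $ j > 0"
    using R_pos unfolding forall_3 r_matrix_nth by simp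
  ultimately show ?thesis
    using num mg three unfolding Y_set_def is_zero_matrix_def by (simp add: r_matrix_nth)
qed

lemma Y_set_A_gens:
  assumes "a \<in> Y_set"
  shows "A_gens a \<in> X_set \<and> r_matrix (A_gens a) = a"
proof -
  let ?n = "A_gens a"
  have num: "is_numerical ?n" and mg: "minimal_gens3 ?n" and three: "card (Betti_elements ?n) = 3"
    and diag: "\<forall>i. a$i$i = 0" and off_diag: "\<forall>i j. i \<noteq> j \<longrightarrow> a$i$j > 0"
    using assms unfolding Y_set_def is_zero_matrix_def by auto
  interpret critical_relations "int (?n$1)" "int (?n$2)" "int (?n$3)"
    "int (c_coef ?n 1)" "int (c_coef ?n 2)" "int (c_coef ?n 3)"
    "int (r_coef ?n 1 2)" "int (r_coef ?n 1 3)" "int (r_coef ?n 2 1)"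
    "int (r_coef ?n 2 3)" "int (r_coef ?n 3 1)" "int (r_coef ?n 3 2)"
    by (rule critical_relations_r_coef[OF mg three])
  have "gcd (int (?n$1)) (gcd (int (?n$2)) (int (?n$3))) = 1"
    using numerical_gcd_eq_1[OF num] by simp
  from minors_determine_matrix[OF this, of "int (a$1$2)" "int (a$1$3)" "int (a$2$1)" "int (a$2$3)"
      "int (a$3$1)" "int (a$3$2)"]
  have "r_coef ?n 1 2 = a$1$2 \<and> r_coef ?n 1 3 = a$1$3 \<and> r_coef ?n 2 1 = a$2$1 \<and>
      r_coef ?n 2 3 = a$2$3 \<and> r_coef ?n 3 1 = a$3$1 \<and> r_coef ?n 3 2 = a$3$2"
    using off_diag unfolding A_gens_nth by (simp add: forall_3)
  then have "r_matrix ?n = a" using diag unfolding vec_eq_iff forall_3 r_matrix_nth by simp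
  then show ?thesis using num mg three unfolding X_set_def by simp
qed

theorem mainTheorem3:
  shows "bij_betw r_matrix X_set Y_set \<and> bij_betw A_gens Y_set X_set \<and>
         (\<forall>n\<in>X_set. A_gens (r_matrix n) = n) \<and> (\<forall>a\<in>Y_set. r_matrix (A_gens a) = a)"
proof -
  have inv_X: "\<forall>n\<in>X_set. A_gens (r_matrix n) = n" and to_Y: "r_matrix ` X_set \<subseteq> Y_set"
    using X_set_r_matrix by auto
  have inv_Y: "\<forall>a\<in>Y_set. r_matrix (A_gens a) = a" and to_X: "A_gens ` Y_set \<subseteq> X_set"
    using Y_set_A_gens by auto
  show ?thesis
    using bij_betw_byWitness[OF inv_X inv_Y to_Y to_X] bij_betw_byWitness[OF inv_Y inv_X to_X to_Y]
      inv_X inv_Y by blast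
qed

end
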